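(* Let $I_A$ and $I_B$ be two MatP instances with the same underlying graph $G=(W\cup F,E)$ that differ only in the preference order of a single agent $x\in W\cup F$. Let $e=\{x,y\}\in E$ and let $I_H$ be a hybrid instance of $(I_A,I_B)$ with respect to $e$. Let $M$ be a matching with $e\in M$. Then: (1) if $M$ is popular for $I_H$, then $M$ is robust popular with respect to $I_A$ and $I_B$; (2) if $M$ is dominant for $I_H$, then $M$ is robust dominant with respect to $I_A$ and $I_B$.
   Context: An instance $I$ of matchings under preferences (MatP) consists of a bipartite graph $G^I=(W\cup F,E^I)$ with disjoint finite vertex sets $W$ (workers) and $F$ (firms), whose elements are called agents, together with, for each agent $x$, a strict linear order $\succ_x^I$ (preference order) over the set $N_x^I$ of neighbors of $x$ in $G^I$. A matching is a set of pairwise disjoint edges; $M(x)$ denotes the partner of a matched agent $x$. Agent $x$ prefers $M$ over $M'$ if $x$ is matched in $M$ and unmatched in $M'$, or matched in both with $M(x)\succ_x M'(x)$. Define $\mathrm{vote}^I_x(M,M')=1$ if $x$ prefers $M$ over $M'$, $-1$ if $x$ prefers $M'$ over $M$, and $0$ otherwise, and the popularity margin $\phi^I(M,M')=\sum_{x\in W\cup F}\mathrm{vote}^I_x(M,M')$. A matching $M$ of $G^I$ is popular for $I$ if $\phi^I(M,M')\ge 0$ for every matching $M'$ of $G^I$; it is dominant for $I$ if it is popular and $\phi^I(M,M')>0$ for every matching $M'$ of $G^I$ with $|M'|>|M|$. For two instances $I_A,I_B$ on the same agent sets, a matching is robust popular (resp. robust dominant) with respect to $I_A$ and $I_B$ if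 it is popular (resp. dominant) for both $I_A$ and $I_B$. Hybrid instance: suppose $I_A,I_B$ have the same graph $G$ and differ only in the preferences of agent $x$, and let $e=\{x,y\}\in E$. Let $P^A=\{z: z\succ_x^{I_A} y\}$ and $P^B=\{z: z\succ_x^{I_B} y\}$. A hybrid instance $I_H$ of $(I_A,I_B)$ with respect to $e$ is the MatP instance on $G$ in which every agent $z\neq x$ has preference order $\succ_z^{I_A}$, and $x$ has any linear order $\succ'$ on $N_x$ such that $z\succ' y$ for all $z\in P^A\cup P^B$ and $y\succ' z$ for all $z\in N_x\setminus(P^A\cup P^B\cup\{y\})$. *)

theory Defs
  imports Main
begin

definition bipartite_graph :: "'a set \<Rightarrow> 'a set \<Rightarrow> 'a set set \<Rightarrow> bool" where
  "bipartite_graph W F E \<longleftrightarrow> finite W \<and> finite F \<and> W \<inter> F = {} \<and>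
     (\<forall>e\<in>E. \<exists>w\<in>W. \<exists>f\<in>F. e = {w, f})"

definition nbrs :: "'a set set \<Rightarrow> 'a \<Rightarrow> 'a set" where
  "nbrs E x = {y. {x, y} \<in> E}"

(* pref x is the strict preference of agent x: (a,b) \<in> pref x  means  a \<succ>_x b *)
definition matp_instance :: "'a set \<Rightarrow> 'a set \<Rightarrow> 'a set set \<Rightarrow> ('a \<Rightarrow> 'a rel) \<Rightarrow> bool" where
  "matp_instance W F E pref \<longleftrightarrow> bipartite_graph W F E \<and>
     (\<forall>x\<in>W \<union> F. pref x \<subseteq> nbrs E x \<times> nbrs E x \<and> strict_linear_order_on (nbrs E x) (pref x))"

definition matching :: "'a set set \<Rightarrow> 'a set set \<Rightarrow> bool" where
  "matching E M \<longleftrightarrow> M \<subseteq> E \<and> (\<forall>e1\<in>M. \<forall>e2\<in>M. e1 \<noteq> e2 \<longrightarrow> e1 \<inter> e2 = {})"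

definition matched :: "'a set set \<Rightarrow> 'a \<Rightarrow> bool" where
  "matched M x \<longleftrightarrow> (\<exists>y. {x, y} \<in> M)"

definition partner :: "'a set set \<Rightarrow> 'a \<Rightarrow> 'a" where
  "partner M x = (THE y. {x, y} \<in> M)"

definition prefers :: "('a \<Rightarrow> 'a rel) \<Rightarrow> 'a \<Rightarrow> 'a set set \<Rightarrow> 'a set set \<Rightarrow> bool" where
  "prefers pref x M M' \<longleftrightarrow>
     (matched M x \<and> \<not> matched M' x) \<or>
     (matched M x \<and> matched M' x \<and> (partner M x, partner M' x) \<in> pref x)"

definition vote :: "('a \<Rightarrow> 'a rel) \<Rightarrow> 'a \<Rightarrow> 'a set set \<Rightarrow> 'a set set \<Rightarrow> int" where
  "vote pref x M M' = (if prefers pref x M M' then 1 else if prefers pref x M' M then -1 else 0)"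

definition phi :: "'a set \<Rightarrow> 'a set \<Rightarrow> ('a \<Rightarrow> 'a rel) \<Rightarrow> 'a set set \<Rightarrow> 'a set set \<Rightarrow> int" where
  "phi W F pref M M' = (\<Sum>x\<in>W \<union> F. vote pref x M M')"

definition popular :: "'a set \<Rightarrow> 'a set \<Rightarrow> 'a set set \<Rightarrow> ('a \<Rightarrow> 'a rel) \<Rightarrow> 'a set set \<Rightarrow> bool" where
  "popular W F E pref M \<longleftrightarrow> matching E M \<and> (\<forall>M'. matching E M' \<longrightarrow> phi W F pref M M' \<ge> 0)"

definition dominant :: "'a set \<Rightarrow> 'a set \<Rightarrow> 'a set set \<Rightarrow> ('a \<Rightarrow> 'a rel) \<Rightarrow> 'a set set \<Rightarrow> bool" where
  "dominant W F E pref M \<longleftrightarrow> popular W F E pref M \<and>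
     (\<forall>M'. matching E M' \<and> card M' > card M \<longrightarrow> phi W F pref M M' > 0)"

definition robust_popular where
  "robust_popular W F E prefA prefB M \<longleftrightarrow> popular W F E prefA M \<and> popular W F E prefB M"

definition robust_dominant where
  "robust_dominant W F E prefA prefB M \<longleftrightarrow> dominant W F E prefA M \<and> dominant W F E prefB M"

definition hybrid :: "'a set \<Rightarrow> 'a set \<Rightarrow> 'a set set \<Rightarrow> ('a \<Rightarrow> 'a rel) \<Rightarrow> ('a \<Rightarrow> 'a rel)
                      \<Rightarrow> 'a \<Rightarrow> 'a \<Rightarrow> ('a \<Rightarrow> 'a rel) \<Rightarrow> bool" where
  "hybrid W F E prefA prefB x y prefH \<longleftrightarrow>
     matp_instance W F E prefH \<and>
     (\<forall>z. z \<noteq> x \<longrightarrow> prefH z = prefA z) \<and>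
     (let PA = {z. (z, y) \<in> prefA x}; PB = {z. (z, y) \<in> prefB x} in
        (\<forall>z\<in>PA \<union> PB. (z, y) \<in> prefH x) \<and>
        (\<forall>z\<in>nbrs E x - (PA \<union> PB \<union> {y}). (y, z) \<in> prefH x))"

end

theory Submission
  imports Defs
begin

text \<open>In the hybrid order, \<open>x\<close> ranks above \<open>y = M(x)\<close> every neighbour that \<open>I\<^sub>A\<close> or \<open>I\<^sub>B\<close>
  ranks above \<open>y\<close>, while all other agents keep their preferences. Hence in every comparison of \<open>M\<close> with some \<open>M'\<close>,
  each agent's vote for \<open>M\<close> under \<open>I\<^sub>A\<close> (or \<open>I\<^sub>B\<close>) is at least its vote under \<open>I\<^sub>H\<close>: only \<open>x\<close>
  can vote differently, and if \<open>x\<close> prefers its partner in \<open>M'\<close> over \<open>y\<close> in \<open>I\<^sub>A\<close>, then so it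
  does in \<open>I\<^sub>H\<close>. So \<open>\<phi>\<^sup>A(M,M') \<ge> \<phi>\<^sup>H(M,M')\<close> for all \<open>M'\<close>, which transfers popularity and
  dominance from \<open>I\<^sub>H\<close> to \<open>I\<^sub>A\<close> and \<open>I\<^sub>B\<close>.\<close>

lemma matching_edges_disjoint:
  assumes "matching E M" "e1 \<in> M" "e2 \<in> M" "e1 \<noteq> e2"
  shows "e1 \<inter> e2 = {}"
  using assms unfolding matching_def by blast

lemma matching_partner_eq:
  assumes "matching E M" "{x, y} \<in> M"
  shows "partner M x = y"
  unfolding partner_def
proof (rule the_equality)
  show "{x, y} \<in> M" by fact
  fix y' assume y': "{x, y'} \<in> M"
  have "{x, y'} = {x, y}"
    using matching_edges_disjoint[OF assms(1) y' assms(2)] by blast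
  then show "y' = y" by (metis doubleton_eq_iff)
qed

lemma matching_edge_nbrs:
  assumes "matching E M" "{x, y} \<in> M"
  shows "y \<in> nbrs E x"
proof -
  have "M \<subseteq> E" using assms(1) by (simp add: matching_def)
  with assms(2) show ?thesis by (auto simp: nbrs_def)
qed

lemma vote_mono:
  assumes "prefers Q v M M' \<Longrightarrow> prefers P v M M'"
    and "prefers P v M' M \<Longrightarrow> prefers Q v M' M"
  shows "vote Q v M M' \<le> vote P v M M'"
  using assms unfolding vote_def
  by (cases "prefers Q v M M'"; cases "prefers P v M' M"; simp)

lemma vote_le_if_partner_demoted:
  fixes P Q :: "'a \<Rightarrow> 'a rel"
  assumes M: "matching E M" "{x, y} \<in> M"
    and M': "matching E M'"
    and agree: "\<forall>z. z \<noteq> x \<longrightarrow> P z = Q z"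
    and above: "\<forall>z. (z, y) \<in> P x \<longrightarrow> (z, y) \<in> Q x"
    and P_total: "total_on (nbrs E x) (P x)"
    and Q_irrefl: "irrefl (Q x)" and Q_trans: "trans (Q x)"
  shows "vote Q v M M' \<le> vote P v M M'"
proof (cases "v = x")
  case False
  with agree have "P v = Q v" by blast
  then show ?thesis by (simp add: vote_def prefers_def)
next
  case True
  have matched_x: "matched M x" using M(2) unfolding matched_def by blast
  have partner_x: "partner M x = y" using matching_partner_eq[OF M] .
  show ?thesis unfolding True
  proof (rule vote_mono)
    assume Q_prefers: "prefers Q x M M'"
    show "prefers P x M M'"
    proof (cases "matched M' x")
      case False
      with matched_x show ?thesis by (simp add: prefers_def)
    next
      case True
      then obtain z where z: "{x, z} \<in> M'" unfolding matched_def by blast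
      have partner'_x: "partner M' x = z" using matching_partner_eq[OF M' z] .
      have yz: "(y, z) \<in> Q x"
        using Q_prefers True matched_x partner_x partner'_x by (simp add: prefers_def)
      have "(z, y) \<notin> P x"
        using above yz Q_irrefl Q_trans unfolding irrefl_def trans_def by blast
      moreover have "z \<noteq> y" using yz Q_irrefl unfolding irrefl_def by blast
      ultimately have "(y, z) \<in> P x"
        using P_total matching_edge_nbrs[OF M] matching_edge_nbrs[OF M' z]
        unfolding total_on_def by blast
      then show ?thesis using True matched_x partner_x partner'_x by (simp add: prefers_def)
    qed
  next
    show "prefers P x M' M \<Longrightarrow> prefers Q x M' M"
      using above matched_x partner_x by (auto simp: prefers_def)
  qed
qed

lemma matp_instance_strict_linear_order_on:
  assumes "matp_instance W F E P" "x \<in> W \<union> F"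
  shows "strict_linear_order_on (nbrs E x) (P x)"
  using assms by (simp add: matp_instance_def)

lemma hybrid_phi_le:
  assumes P_inst: "matp_instance W F E P"
    and P_choice: "P \<in> {prefA, prefB}"
    and AB: "\<forall>z. z \<noteq> x \<longrightarrow> prefA z = prefB z"
    and x: "x \<in> W \<union> F"
    and H: "hybrid W F E prefA prefB x y prefH"
    and M: "matching E M" "{x, y} \<in> M"
    and M': "matching E M'"
  shows "phi W F prefH M M' \<le> phi W F P M M'"
  unfolding phi_def
proof (rule sum_mono, rule vote_le_if_partner_demoted[OF M M'])
  have H_inst: "matp_instance W F E prefH"
    and H_agree: "\<forall>z. z \<noteq> x \<longrightarrow> prefH z = prefA z"
    and H_above: "\<forall>z. (z, y) \<in> prefA x \<or> (z, y) \<in> prefB x \<longrightarrow> (z, y) \<in> prefH x"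
    using H unfolding hybrid_def Let_def by auto
  show "\<forall>z. z \<noteq> x \<longrightarrow> P z = prefH z" using H_agree P_choice AB by auto
  show "\<forall>z. (z, y) \<in> P x \<longrightarrow> (z, y) \<in> prefH x" using H_above P_choice by auto
  show "total_on (nbrs E x) (P x)"
    using matp_instance_strict_linear_order_on[OF P_inst x]
    unfolding strict_linear_order_on_def by blast
  show "irrefl (prefH x)" "trans (prefH x)"
    using matp_instance_strict_linear_order_on[OF H_inst x]
    unfolding strict_linear_order_on_def by auto
qed

lemma popular_if_phi_ge:
  assumes "popular W F E Q M"
    and "\<And>M'. matching E M' \<Longrightarrow> phi W F Q M M' \<le> phi W F P M M'"
  shows "popular W F E P M"
  using assms unfolding popular_def by (meson order_trans)

lemma dominant_if_phi_ge:
  assumes "dominant W F E Q M"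
    and "\<And>M'. matching E M' \<Longrightarrow> phi W F Q M M' \<le> phi W F P M M'"
  shows "dominant W F E P M"
  using assms popular_if_phi_ge unfolding dominant_def by (meson order_less_le_trans)

theorem lemma1:
  fixes W F :: "'a set" and E M :: "'a set set" and prefA prefB prefH :: "'a \<Rightarrow> 'a rel"
    and x y :: 'a
  assumes "matp_instance W F E prefA"
    and "matp_instance W F E prefB"
    and "x \<in> W \<union> F"
    and "\<forall>z. z \<noteq> x \<longrightarrow> prefA z = prefB z"
    and "{x, y} \<in> E"
    and "hybrid W F E prefA prefB x y prefH"
    and "matching E M"
    and "{x, y} \<in> M"
  shows "(popular W F E prefH M \<longrightarrow> robust_popular W F E prefA prefB M) \<and>
         (dominant W F E prefH M \<longrightarrow> robust_dominant W F E prefA prefB M)"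
proof -
  have phi_le: "phi W F prefH M M' \<le> phi W F P M M'"
    if "P \<in> {prefA, prefB}" "matching E M'" for P M'
  proof -
    from that(1) assms(1,2) have "matp_instance W F E P" by blast
    from hybrid_phi_le[OF this that(1) assms(4,3,6,7,8) that(2)] show ?thesis .
  qed
  have "popular W F E P M" if "popular W F E prefH M" "P \<in> {prefA, prefB}" for P
    using popular_if_phi_ge[OF that(1) phi_le[OF that(2)]] .
  moreover have "dominant W F E P M" if "dominant W F E prefH M" "P \<in> {prefA, prefB}" for P
    using dominant_if_phi_ge[OF that(1) phi_le[OF that(2)]] .
  ultimately show ?thesis
    unfolding robust_popular_def robust_dominant_def by blast
qed

end
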